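(* Let $Q\subseteq\mathbb{R}^2$ be a convex polygon such that $\tau Q\subseteq Q^{\circ}$. Then the area of $Q^{\circ}$ is at least $3$.
   Context: $\tau:\mathbb{R}^2\to\mathbb{R}^2$ denotes the $90^\circ$ counterclockwise rotation. For a nonempty compact convex set $Q\subseteq\mathbb{R}^2$, its polar is $Q^{\circ}=\{x\in\mathbb{R}^2: y^\top x\le 1 \text{ for all } y\in Q\}$. *)

theory Defs
  imports "HOL-Analysis.Analysis"
begin

definition rot90 :: "real^2 \<Rightarrow> real^2" where
  "rot90 x = vector [- (x $ 2), x $ 1]"

definition polar :: "(real^2) set \<Rightarrow> (real^2) set" where
  "polar Q = {x. \<forall>y\<in>Q. y \<bullet> x \<le> 1}"

definition convex_polygon :: "(real^2) set \<Rightarrow> bool" where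
  "convex_polygon Q \<longleftrightarrow> (\<exists>S. finite S \<and> Q = convex hull S) \<and> interior Q \<noteq> {}"

end

theory Submission
  imports Defs
begin

text \<open>Write Q as the convex hull of a finite set S and put W = S \<union> -S. Then polar W, a subset
  of polar Q, is the unit ball of the norm support_fun W, and the hypothesis says det2 w w' \<le> 1
  on W, i.e. rot90 maps W into polar W. The unit circle of a planar norm carries an affinely
  regular hexagon with vertices \<plusminus>v1, \<plusminus>v2, \<plusminus>(v2 - v1). For consecutive vertices p, q pick
  w \<in> W supporting the ball at the unit vector p - q; then u = rot90 w lies in the ball with
  det2 u (q - p) = 1, and triangles with vertices among 0, p, u, q show that the ball has area
  at least 1/2 in the sector between p and q. The six sectors are disjoint.\<close>

definition det2 :: "real^2 \<Rightarrow> real^2 \<Rightarrow> real" where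
  "det2 x y = x$1 * y$2 - x$2 * y$1"

lemma inner_rot90_left: "rot90 x \<bullet> y = det2 x y"
  by (simp add: inner_vec_def sum_2 rot90_def det2_def)

lemma det2_rot90_left: "det2 (rot90 x) y = - (x \<bullet> y)"
  by (simp add: inner_vec_def sum_2 rot90_def det2_def)

lemma det2_rot90_right: "det2 x (rot90 x) = x \<bullet> x"
  by (simp add: inner_vec_def sum_2 rot90_def det2_def power2_eq_square)

lemma rot90_eq_0_iff [simp]: "rot90 x = 0 \<longleftrightarrow> x = 0"
  by (auto simp: rot90_def vec_eq_iff forall_2)

lemma det2_commute: "det2 y x = - det2 x y"
  by (simp add: det2_def)

lemma det2_simps [simp]:
  "det2 (x + y) z = det2 x z + det2 y z"  "det2 x (y + z) = det2 x y + det2 x z"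
  "det2 (x - y) z = det2 x z - det2 y z"  "det2 x (y - z) = det2 x y - det2 x z"
  "det2 (c *\<^sub>R x) y = c * det2 x y"      "det2 x (c *\<^sub>R y) = c * det2 x y"
  "det2 (- x) y = - det2 x y"             "det2 x (- y) = - det2 x y"
  "det2 x x = 0"
  by (simp_all add: det2_def algebra_simps)

lemma cramer_det2: "det2 p q *\<^sub>R u = det2 u q *\<^sub>R p + det2 p u *\<^sub>R q"
  by (simp add: vec_eq_iff forall_2 det2_def algebra_simps)

lemma det2_pluecker: "det2 p u * det2 x q = det2 p x * det2 u q + det2 p q * det2 x u"
  by (simp add: det2_def algebra_simps)

lemma emeasure_triangle:
  "emeasure lborel (convex hull {0, p, q}) = ennreal (\<bar>det2 p q\<bar> / 2)"
proof -
  have bounded: "bounded (convex hull {0, p, q})"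
    by (intro compact_imp_bounded finite_imp_compact_convex_hull) auto
  have "emeasure lborel (convex hull {0, p, q}) = measure lborel (convex hull {0, p, q})"
    by (rule emeasure_eq_ennreal_measure) (use emeasure_bounded_finite[OF bounded] in auto)
  then show ?thesis
    using content_triangle[of 0 p q] by (simp add: det2_def mult.commute)
qed

lemma hyperplane_null_sets_lborel:
  fixes a :: "'a::euclidean_space"
  assumes "a \<noteq> 0"
  shows "{x. a \<bullet> x = b} \<in> null_sets lborel"
proof -
  have "{x. a \<bullet> x = b} \<in> sets lborel"
    by (simp add: closed_hyperplane)
  then show ?thesis
    using negligible_hyperplane[of a b] assms
    by (simp add: negligible_iff_null_sets null_sets_completion_iff)
qed

lemma triangle_le_emeasure:
  assumes "A \<in> sets lborel" "N \<in> null_sets lborel" "convex hull {0, p, q} \<subseteq> A \<union> N"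
  shows "ennreal (\<bar>det2 p q\<bar> / 2) \<le> emeasure lborel A"
proof -
  have "ennreal (\<bar>det2 p q\<bar> / 2) \<le> emeasure lborel (A \<union> N)"
    unfolding emeasure_triangle[symmetric] using assms by (intro emeasure_mono) auto
  then show ?thesis
    using emeasure_Un_null_set[OF assms(1,2)] by simp
qed

text \<open>Half-open, so that the six sectors of a hexagon are disjoint; for \<open>0 < det2 p q\<close> it is
  the cone \<open>{a p + b q | a > 0, b \<ge> 0}\<close>.\<close>
definition sector :: "real^2 \<Rightarrow> real^2 \<Rightarrow> (real^2) set" where
  "sector p q = {x. 0 \<le> det2 p x \<and> 0 < det2 x q}"

lemma sets_lborel_sector [measurable]: "sector p q \<in> sets lborel"
proof -
  have "sector p q = {x. 0 \<le> rot90 p \<bullet> x} \<inter> {x. rot90 q \<bullet> x < 0}"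
    by (auto simp: sector_def inner_rot90_left det2_commute[of _ q])
  then show ?thesis
    by (simp add: closed_halfspace_ge open_halfspace_lt)
qed

lemma convex_hull_triangle_subset_sector:
  assumes "0 \<le> det2 p q"
  shows "convex hull {0, p, q} \<subseteq> sector p q \<union> {x. rot90 q \<bullet> x = 0}"
proof
  fix x assume "x \<in> convex hull {0, p, q}"
  then obtain a b where ab: "0 \<le> a" "0 \<le> b" "x = a *\<^sub>R p + b *\<^sub>R q"
    unfolding convex_hull_3 by fastforce
  then have "det2 p x = b * det2 p q" "det2 x q = a * det2 p q"
    by simp_all
  moreover have "rot90 q \<bullet> x = - det2 x q"
    by (simp add: inner_rot90_left det2_commute[of x q])
  ultimately show "x \<in> sector p q \<union> {x. rot90 q \<bullet> x = 0}"
    using ab assms unfolding sector_def by (auto simp: less_le)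
qed

lemma det2_le_emeasure_sector:
  assumes "convex K" "K \<in> sets lborel" "0 \<in> K" "p \<in> K" "q \<in> K" "0 \<le> det2 p q"
  shows "ennreal (det2 p q / 2) \<le> emeasure lborel (K \<inter> sector p q)"
proof (cases "q = 0")
  case False
  have "convex hull {0, p, q} \<subseteq> K"
    using assms by (intro hull_minimal) auto
  then have cover: "convex hull {0, p, q} \<subseteq> (K \<inter> sector p q) \<union> {x. rot90 q \<bullet> x = 0}"
    using convex_hull_triangle_subset_sector[OF assms(6)] by auto
  from False have "rot90 q \<noteq> 0"
    by simp
  from triangle_le_emeasure[OF _ hyperplane_null_sets_lborel[OF this] cover]
  show ?thesis
    using assms(2,6) by simp
qed (simp add: det2_def)

lemma sector_split:
  assumes "0 \<le> det2 p u" "0 < det2 u q" "0 < det2 p q"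
  shows "sector p u \<union> sector u q \<subseteq> sector p q"
proof
  fix x assume x: "x \<in> sector p u \<union> sector u q"
  show "x \<in> sector p q"
  proof (cases "x \<in> sector p u")
    case True
    then have "0 < det2 p x * det2 u q + det2 p q * det2 x u"
      using assms unfolding sector_def by (simp add: add_nonneg_pos)
    then have "0 < det2 p u * det2 x q"
      using det2_pluecker[of p u x q] by simp
    then have "0 < det2 x q"
      using assms(1) by (simp add: zero_less_mult_iff)
    then show ?thesis using True unfolding sector_def by simp
  next
    case False
    then have "0 \<le> det2 u x" "0 < det2 x q"
      using x unfolding sector_def by auto
    then have "0 \<le> det2 p u * det2 x q + det2 p q * det2 u x"
      using assms by (intro add_nonneg_nonneg mult_nonneg_nonneg) auto
    then have "0 \<le> det2 p x * det2 u q"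
      using det2_pluecker[of p u x q] det2_commute[of x u] by simp
    then have "0 \<le> det2 p x"
      using assms(2) by (simp add: zero_le_mult_iff)
    then show ?thesis using \<open>0 < det2 x q\<close> unfolding sector_def by simp
  qed
qed

lemma convex_coeff_sum_le_1:
  assumes "convex K" "p \<in> K" "u \<in> K" "\<And>t. t *\<^sub>R q \<in> K \<Longrightarrow> t \<le> 1"
    and "u = a *\<^sub>R p + b *\<^sub>R q" "a \<le> 0"
  shows "a + b \<le> 1"
proof -
  have "(1 / (1 - a)) *\<^sub>R u + (- a / (1 - a)) *\<^sub>R p \<in> K"
    using assms by (intro convexD) (auto simp: field_simps)
  moreover have "(1 / (1 - a)) *\<^sub>R u + (- a / (1 - a)) *\<^sub>R p = (b / (1 - a)) *\<^sub>R q"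
    using assms(5,6) by (simp add: algebra_simps divide_simps)
  ultimately have "b / (1 - a) \<le> 1"
    using assms(4) by simp
  then show ?thesis
    using assms(6) by (simp add: divide_simps split: if_splits)
qed

text \<open>Either \<open>u\<close> lies in the cone of \<open>p\<close> and \<open>q\<close>, and the triangles \<open>0pu\<close> and \<open>0uq\<close> have
  total area \<open>det2 u (q - p) / 2\<close>; or it does not, and since \<open>p\<close> and \<open>q\<close> are the outermost
  points of \<open>K\<close> on their rays, \<open>det2 p q \<ge> 1\<close>.\<close>
lemma half_le_emeasure_sector:
  assumes K: "convex K" "K \<in> sets lborel" "0 \<in> K"
    and in_K: "p \<in> K" "q \<in> K" "u \<in> K"
    and p_max: "\<And>t. t *\<^sub>R p \<in> K \<Longrightarrow> t \<le> 1" and q_max: "\<And>t. t *\<^sub>R q \<in> K \<Longrightarrow> t \<le> 1"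
    and u: "1 \<le> det2 u (q - p)" and pq: "0 < det2 p q"
  shows "ennreal (1/2) \<le> emeasure lborel (K \<inter> sector p q)"
proof -
  have u_eq: "det2 u (q - p) = det2 p u + det2 u q"
    using det2_commute[of u p] by simp
  show ?thesis
  proof (cases "0 \<le> det2 p u \<and> 0 < det2 u q")
    case True
    have "ennreal (1/2) \<le> ennreal ((det2 p u + det2 u q) / 2)"
      using u u_eq by (intro ennreal_leI) simp
    also have "\<dots> = ennreal (det2 p u / 2) + ennreal (det2 u q / 2)"
      using True by (simp add: ennreal_plus add_divide_distrib)
    also have "\<dots> \<le> emeasure lborel (K \<inter> sector p u) + emeasure lborel (K \<inter> sector u q)"
      using True by (intro add_mono det2_le_emeasure_sector[OF K]) (auto simp: in_K)
    also have "\<dots> = emeasure lborel ((K \<inter> sector p u) \<union> (K \<inter> sector u q))"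
    proof (intro plus_emeasure)
      show "(K \<inter> sector p u) \<inter> (K \<inter> sector u q) = {}"
        using det2_commute[of u] by (auto simp: sector_def)
    qed (use K(2) in auto)
    also have "\<dots> \<le> emeasure lborel (K \<inter> sector p q)"
      using sector_split[of p u q] True pq K(2) by (intro emeasure_mono) auto
    finally show ?thesis .
  next
    case False
    define a b where "a = det2 u q / det2 p q" and "b = det2 p u / det2 p q"
    have "det2 p q *\<^sub>R u = det2 p q *\<^sub>R (a *\<^sub>R p + b *\<^sub>R q)"
      using cramer_det2[of p q u] pq unfolding a_def b_def by (simp add: scaleR_add_right)
    then have u_ab: "u = a *\<^sub>R p + b *\<^sub>R q"
      using pq by simp
    have "a \<le> 0 \<or> b \<le> 0"
      using False pq unfolding a_def b_def by (auto simp: divide_nonpos_pos)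
    then have "a + b \<le> 1"
    proof
      assume "a \<le> 0"
      then show ?thesis
        using convex_coeff_sum_le_1[OF K(1) in_K(1,3) q_max u_ab] by simp
    next
      assume "b \<le> 0"
      moreover have "u = b *\<^sub>R q + a *\<^sub>R p"
        using u_ab by simp
      ultimately show ?thesis
        using convex_coeff_sum_le_1[of K q u p b a, OF K(1) in_K(2,3) p_max] by simp
    qed
    then have "det2 p u + det2 u q \<le> det2 p q"
      using pq unfolding a_def b_def by (simp add: field_simps)
    then have "ennreal (1/2) \<le> ennreal (det2 p q / 2)"
      using u u_eq by (intro ennreal_leI) simp
    also have "\<dots> \<le> emeasure lborel (K \<inter> sector p q)"
      using K in_K pq by (intro det2_le_emeasure_sector) auto
    finally show ?thesis .
  qed
qed

lemma polar_eq_Inter_halfspaces: "polar W = (\<Inter>w\<in>W. {x. w \<bullet> x \<le> 1})"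
  by (auto simp: polar_def)

lemma closed_polar: "closed (polar W)"
  unfolding polar_eq_Inter_halfspaces by (simp add: closed_INT closed_halfspace_le)

lemma sets_lborel_polar [measurable]: "polar W \<in> sets lborel"
  using closed_polar by simp

lemma convex_polar: "convex (polar W)"
  unfolding polar_eq_Inter_halfspaces by (simp add: convex_INT convex_halfspace_le)

lemma zero_in_polar: "0 \<in> polar W"
  by (simp add: polar_def)

lemma polar_antimono: "A \<subseteq> B \<Longrightarrow> polar B \<subseteq> polar A"
  by (auto simp: polar_def)

lemma polar_convex_hull: "polar (convex hull S) = polar S"
proof
  show "polar S \<subseteq> polar (convex hull S)"
  proof
    fix x assume "x \<in> polar S"
    then have "convex hull S \<subseteq> {y. y \<bullet> x \<le> 1}"
      by (intro hull_minimal) (auto simp: polar_def inner_commute[of _ x] convex_halfspace_le)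
    then show "x \<in> polar (convex hull S)"
      by (auto simp: polar_def)
  qed
qed (intro polar_antimono hull_subset)

definition support_fun :: "'a::real_inner set \<Rightarrow> 'a \<Rightarrow> real" where
  "support_fun W z = Max ((\<lambda>w. w \<bullet> z) ` W)"

context
  fixes W :: "'a::real_inner set"
  assumes W: "finite W" "W \<noteq> {}"
begin

lemma support_fun_ge: "w \<in> W \<Longrightarrow> w \<bullet> z \<le> support_fun W z"
  unfolding support_fun_def using W by (intro Max_ge) auto

lemma support_fun_attained:
  obtains w where "w \<in> W" "support_fun W z = w \<bullet> z"
proof -
  have "support_fun W z \<in> (\<lambda>w. w \<bullet> z) ` W"
    unfolding support_fun_def using W by (intro Max_in) auto
  then show ?thesis
    using that by blast
qed

lemma support_fun_le_iff: "support_fun W z \<le> c \<longleftrightarrow> (\<forall>w\<in>W. w \<bullet> z \<le> c)"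
  unfolding support_fun_def using W by (simp add: Max_le_iff)

lemma support_fun_scaleR:
  assumes "0 \<le> c"
  shows "support_fun W (c *\<^sub>R z) = c * support_fun W z"
proof (rule antisym)
  obtain w where "w \<in> W" "support_fun W z = w \<bullet> z"
    by (rule support_fun_attained)
  then show "c * support_fun W z \<le> support_fun W (c *\<^sub>R z)"
    using support_fun_ge[of w "c *\<^sub>R z"] by simp
  show "support_fun W (c *\<^sub>R z) \<le> c * support_fun W z"
    using assms support_fun_ge by (simp add: support_fun_le_iff mult_left_mono)
qed

lemma support_fun_uminus:
  assumes "\<And>w. w \<in> W \<Longrightarrow> - w \<in> W"
  shows "support_fun W (- z) = support_fun W z"
proof -
  have le: "support_fun W (- y) \<le> support_fun W y" for y
    using assms support_fun_ge[of "- _" y] by (auto simp: support_fun_le_iff)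
  show ?thesis
    using le[of z] le[of "- z"] by simp
qed

lemma support_fun_pos:
  assumes "\<And>w. w \<in> W \<Longrightarrow> - w \<in> W" "w \<in> W" "w \<bullet> z \<noteq> 0"
  shows "0 < support_fun W z"
  using support_fun_ge[of w z] support_fun_ge[of "- w" z] assms
  by (cases "0 < w \<bullet> z") auto

end

lemma polar_eq_support_fun:
  "finite W \<Longrightarrow> W \<noteq> {} \<Longrightarrow> polar W = {z. support_fun W z \<le> 1}"
  by (simp add: polar_def support_fun_le_iff)

lemma continuous_on_support_fun:
  fixes W :: "'a::real_inner set"
  assumes "finite W" "W \<noteq> {}"
  shows "continuous_on UNIV (support_fun W)"
  using assms
proof (induction rule: finite_ne_induct)
  case (singleton w)
  have "support_fun {w} = (\<lambda>z. w \<bullet> z)"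
    by (simp add: support_fun_def fun_eq_iff)
  then show ?case
    by (simp add: continuous_on_inner continuous_on_const continuous_on_id)
next
  case (insert w W)
  have "support_fun (insert w W) = (\<lambda>z. max (w \<bullet> z) (support_fun W z))"
    using insert.hyps by (simp add: support_fun_def fun_eq_iff)
  then show ?case
    using insert.IH by (auto intro!: continuous_intros)
qed

text \<open>As \<open>v\<close> runs over the upper half of the unit circle from \<open>v1\<close> to \<open>-v1\<close>, \<open>f (v - v1)\<close>
  goes from \<open>0\<close> to \<open>2\<close>, so it takes the value \<open>1\<close>.\<close>
lemma unit_sphere_contains_hexagon:
  fixes f :: "real^2 \<Rightarrow> real"
  assumes cont: "continuous_on UNIV f"
    and hom: "\<And>c x. 0 \<le> c \<Longrightarrow> f (c *\<^sub>R x) = c * f x"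
    and even: "\<And>x. f (- x) = f x"
    and pos: "\<And>x. x \<noteq> 0 \<Longrightarrow> 0 < f x"
  obtains v1 v2 where "f v1 = 1" "f v2 = 1" "f (v2 - v1) = 1" "0 < det2 v1 v2"
proof -
  have zero: "f 0 = 0"
    using hom[of 0 0] by simp
  have unit: "f ((1 / f x) *\<^sub>R x) = 1" if "x \<noteq> 0" for x
    using hom[of "1 / f x" x] pos[OF that] by simp
  define v1 :: "real^2" where "v1 = (1 / f (axis 1 1)) *\<^sub>R axis 1 1"
  have v1: "f v1 = 1" "v1 \<noteq> 0"
    using unit[of "axis 1 1"] zero by (auto simp: v1_def)
  define path where "path t = (1 - 2 * t) *\<^sub>R v1 + (t * (1 - t)) *\<^sub>R rot90 v1" for t
  have det_path: "det2 v1 (path t) = t * (1 - t) * (v1 \<bullet> v1)" for t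
    by (simp add: path_def det2_rot90_right)
  have path_ends: "path 0 = v1" "path 1 = - v1"
    by (simp_all add: path_def)
  have path_nonzero: "path t \<noteq> 0" for t
  proof (cases "t = 0 \<or> t = 1")
    case False
    then show ?thesis
      using det_path[of t] v1(2) by (auto simp: det2_def)
  qed (use path_ends v1(2) in auto)
  define g where "g t = f ((1 / f (path t)) *\<^sub>R path t - v1)" for t
  have "(1 / f (path 1)) *\<^sub>R path 1 - v1 = 2 *\<^sub>R (- v1)"
    using path_ends even[of v1] v1 by (simp add: scaleR_2)
  then have "g 0 = 0" "g 1 = 2"
    using zero hom[of 2 "- v1"] v1 even[of v1] path_ends by (simp_all add: g_def)
  moreover have "continuous_on {0..1} g"
    using pos path_nonzero unfolding g_def path_def
    by (intro continuous_on_compose2[OF cont] continuous_intros) (auto simp: less_imp_neq[symmetric])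
  ultimately obtain t where t: "0 \<le> t" "t \<le> 1" "g t = 1"
    using IVT'[of g 0 1 1] by auto
  with \<open>g 0 = 0\<close> \<open>g 1 = 2\<close> have "t \<noteq> 0" "t \<noteq> 1"
    by auto
  define v2 where "v2 = (1 / f (path t)) *\<^sub>R path t"
  have "0 < f (path t)"
    using pos path_nonzero by blast
  moreover have "0 < t * (1 - t) * (v1 \<bullet> v1)"
    using t \<open>t \<noteq> 0\<close> \<open>t \<noteq> 1\<close> v1(2) by simp
  ultimately have "0 < det2 v1 v2"
    by (simp add: v2_def det_path)
  moreover have "f v2 = 1" "f (v2 - v1) = 1"
    using unit path_nonzero t(3) by (auto simp: v2_def g_def)
  ultimately show ?thesis
    using that v1(1) by blast
qed

lemma half_le_emeasure_polar_sector:
  assumes W: "finite W" "W \<noteq> {}" and det_W: "\<And>w w'. w \<in> W \<Longrightarrow> w' \<in> W \<Longrightarrow> det2 w w' \<le> 1"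
    and unit: "support_fun W p = 1" "support_fun W q = 1" "support_fun W (p - q) = 1"
    and "0 < det2 p q"
  shows "ennreal (1/2) \<le> emeasure lborel (polar W \<inter> sector p q)"
proof -
  obtain w where w: "w \<in> W" "w \<bullet> (p - q) = 1"
    using support_fun_attained[OF W, of "p - q"] unit(3) by metis
  have "rot90 w \<in> polar W"
    using det_W[OF w(1)] by (simp add: polar_def inner_commute[of _ "rot90 w"] inner_rot90_left)
  moreover have radial: "t \<le> 1" if "support_fun W v = 1" "t *\<^sub>R v \<in> polar W" for v t
    using that support_fun_scaleR[OF W, of t v]
    by (cases "0 \<le> t") (auto simp: polar_eq_support_fun[OF W])
  moreover have "1 \<le> det2 (rot90 w) (q - p)"
    using w(2) by (simp add: det2_rot90_left inner_diff_right)
  moreover have "p \<in> polar W" "q \<in> polar W"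
    using unit by (simp_all add: polar_eq_support_fun[OF W])
  ultimately show ?thesis
    using half_le_emeasure_sector[OF convex_polar sets_lborel_polar zero_in_polar] unit \<open>0 < det2 p q\<close>
    by blast
qed

definition hexagon_cycle :: "real^2 \<Rightarrow> real^2 \<Rightarrow> (real^2) list" where
  "hexagon_cycle v1 v2 = [v1, v2, v2 - v1, - v1, - v2, v1 - v2, v1]"

lemma lessThan_6: "{..<6::nat} = {0, 1, 2, 3, 4, 5}"
  by auto

lemma hexagon_cycle_edge:
  fixes v1 v2 :: "real^2"
  assumes "i < 6"
  defines "H \<equiv> hexagon_cycle v1 v2"
  shows "H ! i \<in> set H" "H ! Suc i \<in> set H" "H ! i - H ! Suc i \<in> set H"
    "det2 (H ! i) (H ! Suc i) = det2 v1 v2"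
proof -
  have "i \<in> {0, 1, 2, 3, 4, 5}"
    using assms(1) by auto
  then show "H ! i \<in> set H" "H ! Suc i \<in> set H" "H ! i - H ! Suc i \<in> set H"
    "det2 (H ! i) (H ! Suc i) = det2 v1 v2"
    using det2_commute[of v1 v2] by (auto simp: H_def hexagon_cycle_def)
qed

lemma disjoint_family_hexagon_sectors:
  fixes v1 v2 :: "real^2"
  defines "H \<equiv> hexagon_cycle v1 v2"
  shows "disjoint_family_on (\<lambda>i. sector (H ! i) (H ! Suc i)) {..<6}"
proof -
  have x_v1: "det2 x v1 = - det2 v1 x" and v2_x: "det2 v2 x = - det2 x v2" for x
    by (simp_all add: det2_commute[of x])
  show ?thesis
    unfolding disjoint_family_on_def lessThan_6
    by (simp add: H_def hexagon_cycle_def sector_def x_v1 v2_x set_eq_iff)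
qed

lemma emeasure_polar_ge_3:
  assumes W: "finite W" "W \<noteq> {}" and sym: "\<And>w. w \<in> W \<Longrightarrow> - w \<in> W"
    and det_W: "\<And>w w'. w \<in> W \<Longrightarrow> w' \<in> W \<Longrightarrow> det2 w w' \<le> 1"
    and span: "\<And>z. z \<noteq> 0 \<Longrightarrow> \<exists>w\<in>W. w \<bullet> z \<noteq> 0"
  shows "3 \<le> emeasure lborel (polar W)"
proof -
  obtain v1 v2 where v: "support_fun W v1 = 1" "support_fun W v2 = 1"
    "support_fun W (v2 - v1) = 1" "0 < det2 v1 v2"
    using unit_sphere_contains_hexagon[OF continuous_on_support_fun[OF W]]
      support_fun_scaleR[OF W] support_fun_uminus[OF W sym] support_fun_pos[OF W sym] span
    by metis
  define H where "H = hexagon_cycle v1 v2"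
  define F where "F i = polar W \<inter> sector (H ! i) (H ! Suc i)" for i
  have unit: "support_fun W v = 1" if "v \<in> set H" for v
    using that v support_fun_uminus[OF W sym, of "v2 - v1"]
    by (auto simp: H_def hexagon_cycle_def support_fun_uminus[OF W sym])
  have "ennreal 3 = (\<Sum>i<6::nat. ennreal (1/2))"
    by (subst sum_ennreal) simp_all
  also have "\<dots> \<le> (\<Sum>i<6. emeasure lborel (F i))"
  proof (rule sum_mono)
    fix i assume "i \<in> {..<6::nat}"
    then show "ennreal (1/2) \<le> emeasure lborel (F i)"
      using hexagon_cycle_edge[of i v1 v2] unit v(4) unfolding F_def H_def
      by (intro half_le_emeasure_polar_sector[OF W det_W]) auto
  qed
  also have "\<dots> = emeasure lborel (\<Union>i<6. F i)"
    using disjoint_family_hexagon_sectors[of v1 v2]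
    by (intro sum_emeasure) (auto simp: F_def H_def disjoint_family_on_def sets_lborel_polar)
  also have "\<dots> \<le> emeasure lborel (polar W)"
    by (intro emeasure_mono sets_lborel_polar) (auto simp: F_def)
  finally show ?thesis
    by simp
qed

lemma det2_le_1_if_rot90_polar:
  assumes "rot90 ` Q \<subseteq> polar Q" "x \<in> Q" "y \<in> Q"
  shows "det2 x y \<le> 1"
proof -
  have "y \<bullet> rot90 x \<le> 1"
    using assms by (auto simp: polar_def)
  then show ?thesis
    by (simp add: inner_commute[of y] inner_rot90_left)
qed

lemma det2_le_1_symmetrize:
  assumes "\<And>x y. x \<in> S \<Longrightarrow> y \<in> S \<Longrightarrow> det2 x y \<le> 1"
    and "w \<in> S \<union> uminus ` S" "w' \<in> S \<union> uminus ` S"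
  shows "det2 w w' \<le> 1"
proof -
  have "det2 (- x) (- y) = det2 x y" "det2 x (- y) = det2 y x" "det2 (- x) y = det2 y x" for x y
    using det2_commute[of x y] by simp_all
  then show ?thesis
    using assms by auto
qed

lemma inner_nonzero_if_interior_convex_hull:
  fixes z :: "'a::euclidean_space"
  assumes "interior (convex hull S) \<noteq> {}" "z \<noteq> 0"
  shows "\<exists>s\<in>S. s \<bullet> z \<noteq> 0"
proof (rule ccontr)
  assume "\<not> ?thesis"
  then have "S \<subseteq> {x. z \<bullet> x = 0}"
    by (auto simp: inner_commute)
  then have "convex hull S \<subseteq> {x. z \<bullet> x = 0}"
    by (intro hull_minimal convex_hyperplane)
  then have "interior (convex hull S) \<subseteq> interior {x. z \<bullet> x = 0}"
    by (rule interior_mono)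
  with assms show False
    by simp
qed

theorem lemma4:
  fixes Q :: "(real^2) set"
  assumes "convex_polygon Q"
    and "rot90 ` Q \<subseteq> polar Q"
  shows "emeasure lborel (polar Q) \<ge> 3"
proof -
  obtain S where S: "finite S" "Q = convex hull S" and interior: "interior Q \<noteq> {}"
    using assms(1) unfolding convex_polygon_def by blast
  define W where "W = S \<union> uminus ` S"
  have "S \<noteq> {}"
    using interior S(2) by auto
  have "3 \<le> emeasure lborel (polar W)"
  proof (rule emeasure_polar_ge_3)
    show "finite W" "W \<noteq> {}" "\<And>w. w \<in> W \<Longrightarrow> - w \<in> W"
      using S(1) \<open>S \<noteq> {}\<close> by (auto simp: W_def)
    show "\<And>w w'. w \<in> W \<Longrightarrow> w' \<in> W \<Longrightarrow> det2 w w' \<le> 1"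
      unfolding W_def
      by (rule det2_le_1_symmetrize[OF det2_le_1_if_rot90_polar[OF assms(2)]])
        (auto simp: S(2) hull_inc)
    show "\<And>z. z \<noteq> 0 \<Longrightarrow> \<exists>w\<in>W. w \<bullet> z \<noteq> 0"
      using inner_nonzero_if_interior_convex_hull[of S] interior S(2) by (auto simp: W_def)
  qed
  also have "\<dots> \<le> emeasure lborel (polar Q)"
    unfolding S(2) polar_convex_hull W_def
    by (intro emeasure_mono polar_antimono sets_lborel_polar) auto
  finally show ?thesis .
qed

end
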